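(* Let $n\ge3$ and let $\mathcal T$ be an admissible family of arcs with endpoints in $[n]$ consisting of exactly $n-1$ arcs (equivalently, a set of $n-1$ facets of $W_n$ with nonempty intersection). Then the vectors $\{e_i-e_j:[i,j)\in\mathcal T\}$ form a $\mathbb{Z}$-basis of the type A root lattice $\Lambda_n=\{x\in\mathbb{Z}^n:\sum_i x_i=0\}$. Consequently $(W_n,\phi_n)$ is a combinatorial quasitoric pair.
   Context: Identify $[n]$ with the vertices of a regular $n$-gon in $S^1$, labelled counterclockwise, with counterclockwise order $\preceq$; for $a\ne b\in[n]$, $[a,b)=\{z\in S^1:a\preceq z\prec b\}$. A finite collection of such arcs is admissible if any two distinct members $I,J$ are either intersecting and strictly nested, or disjoint with the sink of neither equal to the source of the other. Admissible families of arcs correspond to faces of the $(n-1)$-dimensional cyclohedron $W_n$, single arcs to facets. $\phi_n$ assigns to the facet $[i,j)$ the vector $e_i-e_j$. A combinatorial quasitoric pair $(P,\phi)$ consists of a simple $(n-1)$-polytope $P$ and an assignment of lattice vectors in $\mathbb{Z}^{n-1}$ to facets such that the vectors of any $n-1$ facets meeting in a vertex form a lattice basis. *)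

theory Defs
  imports Complex_Main
begin

text \<open>The circle S^1 is modelled as R / nZ; vertex i of the regular n-gon sits at
  position i (so vertex n coincides with position 0).  Subsets of S^1 are represented
  by their nZ-periodic preimages in R.  cdist n x y is the counterclockwise
  distance from x to y, a value in [0,n).\<close>

definition cdist :: "nat \<Rightarrow> real \<Rightarrow> real \<Rightarrow> real" where
  "cdist n x y = (y - x) - real n * of_int \<lfloor>(y - x) / real n\<rfloor>"

text \<open>An arc is a pair (a,b) (source a, sink b) of distinct vertices in [n];
  its point set is [a,b) = {z : a \<preceq> z \<prec> b} in counterclockwise order.\<close>

definition arc_set :: "nat \<Rightarrow> nat \<times> nat \<Rightarrow> real set" where
  "arc_set n I = {z. cdist n (real (fst I)) z < cdist n (real (fst I)) (real (snd I))}"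

definition is_arc :: "nat \<Rightarrow> nat \<times> nat \<Rightarrow> bool" where
  "is_arc n I \<longleftrightarrow> fst I \<in> {1..n} \<and> snd I \<in> {1..n} \<and> fst I \<noteq> snd I"

definition admissible :: "nat \<Rightarrow> (nat \<times> nat) set \<Rightarrow> bool" where
  "admissible n T \<longleftrightarrow> finite T \<and> (\<forall>I\<in>T. is_arc n I) \<and>
     (\<forall>I\<in>T. \<forall>J\<in>T. I \<noteq> J \<longrightarrow>
        ((arc_set n I \<inter> arc_set n J \<noteq> {} \<and>
            (arc_set n I \<subset> arc_set n J \<or> arc_set n J \<subset> arc_set n I))
         \<or> (arc_set n I \<inter> arc_set n J = {} \<and> snd I \<noteq> fst J \<and> snd J \<noteq> fst I)))"

text \<open>Vectors in Z^n are functions nat \<Rightarrow> int supported on {1..n}.\<close>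

definition root_vec :: "nat \<times> nat \<Rightarrow> nat \<Rightarrow> int" where
  "root_vec I k = (if k = fst I then 1 else 0) - (if k = snd I then 1 else 0)"

definition root_lattice :: "nat \<Rightarrow> (nat \<Rightarrow> int) set" where
  "root_lattice n = {x. (\<forall>k. k \<notin> {1..n} \<longrightarrow> x k = 0) \<and> (\<Sum>k=1..n. x k) = 0}"

definition is_Z_basis :: "('i \<Rightarrow> nat \<Rightarrow> int) \<Rightarrow> 'i set \<Rightarrow> (nat \<Rightarrow> int) set \<Rightarrow> bool" where
  "is_Z_basis v T L \<longleftrightarrow> finite T \<and> (\<forall>t\<in>T. v t \<in> L) \<and>
     (\<forall>x\<in>L. \<exists>!c. (\<forall>t. t \<notin> T \<longrightarrow> c t = 0) \<and> x = (\<lambda>k. \<Sum>t\<in>T. c t * v t k))"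

end

theory Submission
  imports Defs
begin

text \<open>View each arc [i,j) as an edge between its endpoints i and j.  In an admissible family these
  edges form a forest: in any subfamily, an inclusion-minimal arc has an endpoint met by no other
  arc of the subfamily, because arcs meeting both its endpoints would extend it at both ends and
  would then cross.  With n - 1 edges on the n vertices the forest is a spanning tree, and the
  vectors e_i - e_j of the edges of a spanning tree form a Z-basis of the root lattice: removing a
  pendant edge reduces both spanning and independence to a smaller tree, the coordinate at the
  pendant vertex determining the coefficient of the removed edge.

  Incidences between arcs and vertices are decided by testing the points k and k - 1/2 of the
  circle, which lie on either side of vertex k.\<close>

lemma cdist_eq:
  assumes "n > 0" and "y - x = of_int m + f" and "0 \<le> f" "f < 1"
  shows "cdist n x y = of_int (m mod int n) + f"
proof -
  define q r where "q = m div int n" and "r = m mod int n"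
  have m: "m = int n * q + r" by (simp add: q_def r_def)
  have r: "0 \<le> r" "r < int n" using assms(1) by (auto simp: r_def)
  then have "real_of_int r + 1 \<le> real n" by linarith
  have "(y - x) / real n = of_int q + (of_int r + f) / real n"
    using assms(1,2) by (simp add: m field_simps)
  moreover have "0 \<le> (of_int r + f) / real n" "(of_int r + f) / real n < 1"
    using r assms \<open>real_of_int r + 1 \<le> real n\<close> by (simp_all add: divide_less_eq)
  ultimately have "\<lfloor>(y - x) / real n\<rfloor> = q" by (simp add: floor_eq_iff)
  moreover have "r mod int n = r" using r by simp
  ultimately show ?thesis unfolding cdist_def using assms(2) by (simp add: m algebra_simps)
qed

lemma vertex_mem_arc_iff:
  assumes "n > 0"
  shows "real k \<in> arc_set n (a, b) \<longleftrightarrow> (int k - int a) mod int n < (int b - int a) mod int n"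
proof -
  have "cdist n (real a) (real k) = of_int ((int k - int a) mod int n) + 0"
    by (rule cdist_eq[OF assms]) auto
  moreover have "cdist n (real a) (real b) = of_int ((int b - int a) mod int n) + 0"
    by (rule cdist_eq[OF assms]) auto
  ultimately show ?thesis by (simp add: arc_set_def)
qed

lemma before_vertex_mem_arc_iff:
  assumes "n > 0"
  shows "real k - 1/2 \<in> arc_set n (a, b) \<longleftrightarrow> (int k - 1 - int a) mod int n < (int b - int a) mod int n"
proof -
  have "cdist n (real a) (real k - 1/2) = of_int ((int k - 1 - int a) mod int n) + 1/2"
    by (rule cdist_eq[OF assms]) auto
  moreover have "cdist n (real a) (real b) = of_int ((int b - int a) mod int n) + 0"
    by (rule cdist_eq[OF assms]) auto
  moreover have "of_int u + 1/2 < (of_int v :: real) \<longleftrightarrow> u < v" for u v :: int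
  proof
    assume "of_int u + 1/2 < (of_int v :: real)"
    then show "u < v" by linarith
  next
    assume "u < v"
    then have "of_int u + 1 \<le> (of_int v :: real)" by linarith
    then show "of_int u + 1/2 < (of_int v :: real)" by linarith
  qed
  ultimately show ?thesis by (simp add: arc_set_def)
qed

lemma mod_eq_if_small:
  fixes m :: int
  assumes "- int n \<le> m" "m < int n"
  shows "m mod int n = (if 0 \<le> m then m else m + int n)"
proof (cases "0 \<le> m")
  case False
  then have "(m + int n) mod int n = m + int n" using assms by (intro mod_pos_pos_trivial) auto
  then show ?thesis using False by simp
qed (use assms in simp)

lemma source_mem_arc: "is_arc n (a, b) \<Longrightarrow> real a \<in> arc_set n (a, b)"
  by (auto simp: is_arc_def vertex_mem_arc_iff mod_eq_if_small)

lemma sink_not_mem_arc: "is_arc n (a, b) \<Longrightarrow> real b \<notin> arc_set n (a, b)"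
  by (auto simp: is_arc_def vertex_mem_arc_iff)

lemma before_sink_mem_arc: "is_arc n (a, b) \<Longrightarrow> real b - 1/2 \<in> arc_set n (a, b)"
  by (auto simp: is_arc_def before_vertex_mem_arc_iff mod_eq_if_small)

lemma before_source_not_mem_arc: "is_arc n (a, b) \<Longrightarrow> real a - 1/2 \<notin> arc_set n (a, b)"
  by (auto simp: is_arc_def before_vertex_mem_arc_iff mod_eq_if_small)

lemma vertex_mem_arc_if_before_mem:
  assumes "is_arc n (a, b)" "k \<in> {1..n}" "real k - 1/2 \<in> arc_set n (a, b)" "k \<noteq> b"
  shows "real k \<in> arc_set n (a, b)"
  using assms by (auto simp: is_arc_def vertex_mem_arc_iff before_vertex_mem_arc_iff mod_eq_if_small split: if_splits)

lemma before_mem_arc_if_vertex_mem: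
  assumes "is_arc n (a, b)" "k \<in> {1..n}" "real k \<in> arc_set n (a, b)" "k \<noteq> a"
  shows "real k - 1/2 \<in> arc_set n (a, b)"
  using assms by (auto simp: is_arc_def vertex_mem_arc_iff before_vertex_mem_arc_iff mod_eq_if_small split: if_splits)

definition arcs_compatible :: "nat \<Rightarrow> nat \<times> nat \<Rightarrow> nat \<times> nat \<Rightarrow> bool" where
  "arcs_compatible n I J \<longleftrightarrow>
     (arc_set n I \<inter> arc_set n J \<noteq> {} \<and> (arc_set n I \<subset> arc_set n J \<or> arc_set n J \<subset> arc_set n I))
     \<or> (arc_set n I \<inter> arc_set n J = {} \<and> snd I \<noteq> fst J \<and> snd J \<noteq> fst I)"

lemma admissibleD:
  assumes "admissible n T"
  shows "finite T" and "I \<in> T \<Longrightarrow> is_arc n I"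
    and "I \<in> T \<Longrightarrow> J \<in> T \<Longrightarrow> I \<noteq> J \<Longrightarrow> arcs_compatible n I J"
  using assms unfolding admissible_def arcs_compatible_def by blast+

lemma compatible_cases:
  assumes "arcs_compatible n I J" "\<not> arc_set n J \<subset> arc_set n I"
  obtains "arc_set n I \<subseteq> arc_set n J"
    | "arc_set n I \<inter> arc_set n J = {}" "snd I \<noteq> fst J" "snd J \<noteq> fst I"
  using assms unfolding arcs_compatible_def by blast

lemma compatible_arc_at_source:
  assumes I: "is_arc n (a, b)" and J: "is_arc n (c, d)" and "arcs_compatible n (a, b) (c, d)"
    and "\<not> arc_set n (c, d) \<subset> arc_set n (a, b)" "a \<in> {c, d}"
  shows "c = a \<and> arc_set n (a, b) \<subseteq> arc_set n (c, d)"
  using assms(3,4)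
proof (cases rule: compatible_cases)
  case 1
  then have "real a \<in> arc_set n (c, d)" using source_mem_arc[OF I] by blast
  then show ?thesis using 1 sink_not_mem_arc[OF J] assms(5) by auto
next
  case 2
  then show ?thesis using source_mem_arc[OF I] source_mem_arc[OF J] assms(5) by auto
qed

lemma compatible_arc_at_sink:
  assumes I: "is_arc n (a, b)" and J: "is_arc n (c, d)" and "arcs_compatible n (a, b) (c, d)"
    and "\<not> arc_set n (c, d) \<subset> arc_set n (a, b)" "b \<in> {c, d}"
  shows "d = b \<and> arc_set n (a, b) \<subseteq> arc_set n (c, d)"
  using assms(3,4)
proof (cases rule: compatible_cases)
  case 1
  then have "real b - 1/2 \<in> arc_set n (c, d)" using before_sink_mem_arc[OF I] by blast
  then show ?thesis using 1 before_source_not_mem_arc[OF J] assms(5) by auto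
next
  case 2
  then show ?thesis using before_sink_mem_arc[OF I] before_sink_mem_arc[OF J] assms(5) by auto
qed

lemma arcs_extending_both_ends_incompatible:
  assumes "is_arc n (a, b)" "is_arc n (a, d)" "is_arc n (c, b)" "c \<noteq> a" "d \<noteq> b"
    and "arc_set n (a, b) \<subseteq> arc_set n (a, d)" "arc_set n (a, b) \<subseteq> arc_set n (c, b)"
  shows "\<not> arcs_compatible n (a, d) (c, b)"
proof -
  have a: "real a \<in> arc_set n (a, d) \<inter> arc_set n (c, b)"
    using source_mem_arc[OF assms(1)] assms(6,7) by blast
  have "real b \<in> arc_set n (a, d)"
    using vertex_mem_arc_if_before_mem[OF assms(2) _ _ assms(5)[symmetric]] before_sink_mem_arc[OF assms(1)]
      assms(1,6) by (auto simp: is_arc_def)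
  moreover have "real b \<notin> arc_set n (c, b)" using assms(3) by (rule sink_not_mem_arc)
  moreover have "real a - 1/2 \<in> arc_set n (c, b)"
    using before_mem_arc_if_vertex_mem[OF assms(3) _ _ assms(4)[symmetric]] a assms(1)
    by (auto simp: is_arc_def)
  moreover have "real a - 1/2 \<notin> arc_set n (a, d)" using assms(2) by (rule before_source_not_mem_arc)
  ultimately show ?thesis using a unfolding arcs_compatible_def by auto
qed

text \<open>For a finite set of edges this is acyclicity: every nonempty subfamily has an edge with
  an endpoint that no other edge of the subfamily meets.\<close>

definition is_forest :: "(nat \<times> nat) set \<Rightarrow> bool" where
  "is_forest T \<longleftrightarrow>
     (\<forall>S\<subseteq>T. S \<noteq> {} \<longrightarrow> (\<exists>I\<in>S. \<exists>v\<in>{fst I, snd I}. \<forall>J\<in>S - {I}. v \<notin> {fst J, snd J}))"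

lemma finite_has_psubset_minimal_image:
  assumes "finite S" "S \<noteq> {}"
  obtains I where "I \<in> S" "\<And>J. J \<in> S \<Longrightarrow> \<not> f J \<subset> f I"
proof -
  have "finite (f ` S)" "f ` S \<noteq> {}" using assms by simp_all
  from finite_has_minimal[OF this] obtain I where I: "I \<in> S"
    and min: "\<And>J. J \<in> S \<Longrightarrow> f J \<le> f I \<Longrightarrow> f I = f J"
    by (metis imageE imageI)
  show thesis
  proof (rule that[OF I])
    fix J assume "J \<in> S"
    then show "\<not> f J \<subset> f I" using min[of J] by auto
  qed
qed

lemma minimal_arc_has_free_endpoint:
  assumes adm: "admissible n T" and "S \<subseteq> T" "(a, b) \<in> S"
    and min: "\<And>J. J \<in> S \<Longrightarrow> \<not> arc_set n J \<subset> arc_set n (a, b)"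
  shows "\<exists>v\<in>{a, b}. \<forall>J\<in>S - {(a, b)}. v \<notin> {fst J, snd J}"
proof (rule ccontr)
  have arc: "is_arc n I" if "I \<in> S" for I using admissibleD(2)[OF adm] assms(2) that by blast
  have compat: "arcs_compatible n I J" if "I \<in> S" "J \<in> S" "I \<noteq> J" for I J
    using admissibleD(3)[OF adm] assms(2) that by blast
  assume "\<not> ?thesis"
  then have "\<exists>c d. (c, d) \<in> S \<and> (c, d) \<noteq> (a, b) \<and> v \<in> {c, d}" if "v \<in> {a, b}" for v
    using that by fastforce
  then obtain c1 d1 c2 d2 where J1: "(c1, d1) \<in> S" "(c1, d1) \<noteq> (a, b)" "a \<in> {c1, d1}"
    and J2: "(c2, d2) \<in> S" "(c2, d2) \<noteq> (a, b)" "b \<in> {c2, d2}"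
    by (meson insertCI)
  have "c1 = a \<and> arc_set n (a, b) \<subseteq> arc_set n (c1, d1)"
    by (rule compatible_arc_at_source[OF arc[OF assms(3)] arc[OF J1(1)]
          compat[OF assms(3) J1(1) J1(2)[symmetric]] min[OF J1(1)] J1(3)])
  then have c1: "c1 = a" and sub1: "arc_set n (a, b) \<subseteq> arc_set n (a, d1)" by blast+
  have "d2 = b \<and> arc_set n (a, b) \<subseteq> arc_set n (c2, d2)"
    by (rule compatible_arc_at_sink[OF arc[OF assms(3)] arc[OF J2(1)]
          compat[OF assms(3) J2(1) J2(2)[symmetric]] min[OF J2(1)] J2(3)])
  then have d2: "d2 = b" and sub2: "arc_set n (a, b) \<subseteq> arc_set n (c2, b)" by blast+
  have "c2 \<noteq> a" "d1 \<noteq> b" using J1(2) J2(2) c1 d2 by auto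
  have "\<not> arcs_compatible n (a, d1) (c2, b)"
    using arcs_extending_both_ends_incompatible[OF arc[OF assms(3)] _ _ \<open>c2 \<noteq> a\<close> \<open>d1 \<noteq> b\<close> sub1 sub2]
      arc[OF J1(1)] arc[OF J2(1)] c1 d2 by simp
  moreover have "arcs_compatible n (a, d1) (c2, b)"
    using compat[OF J1(1) J2(1)] c1 d2 \<open>c2 \<noteq> a\<close> by simp
  ultimately show False by contradiction
qed

lemma admissible_is_forest:
  assumes adm: "admissible n T"
  shows "is_forest T"
  unfolding is_forest_def
proof (intro allI impI)
  fix S assume S: "S \<subseteq> T" "S \<noteq> {}"
  have "finite S" using finite_subset[OF S(1) admissibleD(1)[OF adm]] .
  then obtain I where "I \<in> S" and min: "\<And>J. J \<in> S \<Longrightarrow> \<not> arc_set n J \<subset> arc_set n I"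
    using finite_has_psubset_minimal_image[OF _ S(2), of "arc_set n"] by blast
  moreover obtain a b where "I = (a, b)" by (cases I)
  ultimately have "\<exists>v\<in>{a, b}. \<forall>J\<in>S - {(a, b)}. v \<notin> {fst J, snd J}"
    using minimal_arc_has_free_endpoint[OF adm S(1)] by simp
  then show "\<exists>I\<in>S. \<exists>v\<in>{fst I, snd I}. \<forall>J\<in>S - {I}. v \<notin> {fst J, snd J}"
    using \<open>I = (a, b)\<close> by (intro bexI[OF _ \<open>I \<in> S\<close>]) simp
qed

lemma root_vec_off_endpoints: "v \<notin> {fst I, snd I} \<Longrightarrow> root_vec I v = 0"
  by (auto simp: root_vec_def)

lemma root_vec_at_endpoint: "fst I \<noteq> snd I \<Longrightarrow> v \<in> {fst I, snd I} \<Longrightarrow> root_vec I v * root_vec I v = 1"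
  by (auto simp: root_vec_def)

lemma sum_root_vec:
  assumes "finite V" "fst I \<in> V" "snd I \<in> V"
  shows "(\<Sum>k\<in>V. root_vec I k) = 0"
  using assms by (simp add: root_vec_def sum_subtractf sum.delta)

lemma is_forest_subset:
  assumes "is_forest T" "S \<subseteq> T"
  shows "is_forest S"
  unfolding is_forest_def
proof (intro allI impI)
  fix U assume "U \<subseteq> S" "U \<noteq> {}"
  with assms(2) show "\<exists>I\<in>U. \<exists>v\<in>{fst I, snd I}. \<forall>J\<in>U - {I}. v \<notin> {fst J, snd J}"
    by (intro assms(1)[unfolded is_forest_def, rule_format]) auto
qed

lemma is_forest_pendant_edge:
  assumes "is_forest T" "T \<noteq> {}"
  obtains I v where "I \<in> T" "v \<in> {fst I, snd I}" "\<And>J. J \<in> T - {I} \<Longrightarrow> v \<notin> {fst J, snd J}"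
  using assms(1)[unfolded is_forest_def, rule_format, of T] assms(2) by blast

lemma sum_at_pendant_vertex:
  assumes "finite T" "I \<in> T" "\<And>J. J \<in> T - {I} \<Longrightarrow> v \<notin> {fst J, snd J}"
  shows "(\<Sum>t\<in>T. c t * root_vec t v) = c I * root_vec I v"
proof -
  have "(\<Sum>t\<in>T - {I}. c t * root_vec t v) = 0"
    using assms(3) by (simp add: root_vec_off_endpoints)
  then show ?thesis using assms(1,2) by (simp add: sum.remove)
qed

lemma forest_root_vecs_independent:
  assumes "finite T" "is_forest T" "\<forall>I\<in>T. fst I \<noteq> snd I"
    and "\<forall>k. (\<Sum>t\<in>T. c t * root_vec t k) = 0"
  shows "\<forall>t\<in>T. c t = 0"
  using assms
proof (induction T rule: finite_remove_induct)
  case (remove A)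
  obtain I v where I: "I \<in> A" "v \<in> {fst I, snd I}" and pendant: "\<And>J. J \<in> A - {I} \<Longrightarrow> v \<notin> {fst J, snd J}"
    using is_forest_pendant_edge[OF remove.prems(1) remove.hyps(2)] by blast
  have "c I * root_vec I v = (\<Sum>t\<in>A. c t * root_vec t v)"
    by (rule sum_at_pendant_vertex[OF remove.hyps(1) I(1) pendant, symmetric])
  also have "\<dots> = 0" using remove.prems(3) by blast
  finally have "c I * root_vec I v = 0" .
  then have cI: "c I = 0"
    using root_vec_at_endpoint[of I v] remove.prems(2) I by auto
  have "(\<Sum>t\<in>A - {I}. c t * root_vec t k) = (\<Sum>t\<in>A. c t * root_vec t k)" for k
    using remove.hyps(1) I(1) cI by (simp add: sum.remove)
  then have "\<forall>t\<in>A - {I}. c t = 0"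
    using remove.IH[OF I(1)] remove.prems is_forest_subset[of A "A - {I}"] by auto
  then show ?case using cI by blast
qed simp

lemma forest_root_vecs_span:
  assumes "finite T" "is_forest T" "finite V" "\<forall>I\<in>T. fst I \<in> V \<and> snd I \<in> V \<and> fst I \<noteq> snd I"
    and "card V = card T + 1" "\<forall>k. k \<notin> V \<longrightarrow> x k = 0" "(\<Sum>k\<in>V. x k) = 0"
  shows "\<exists>c. x = (\<lambda>k. \<Sum>t\<in>T. c t * root_vec t k)"
  using assms
proof (induction T arbitrary: V x rule: finite_remove_induct)
  case empty
  then obtain w where "V = {w}" using card_1_singletonE by auto
  then have "x k = 0" for k using empty.prems(5,6) by (cases "k = w") auto
  then show ?case by auto
next
  case (remove A)
  obtain I v where I: "I \<in> A" "v \<in> {fst I, snd I}" and pendant: "\<And>J. J \<in> A - {I} \<Longrightarrow> v \<notin> {fst J, snd J}"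
    using is_forest_pendant_edge[OF remove.prems(1) remove.hyps(2)] by blast
  have endpoints: "fst I \<in> V" "snd I \<in> V" "fst I \<noteq> snd I" and "v \<in> V"
    using remove.prems(3) I by auto
  define \<alpha> where "\<alpha> = x v * root_vec I v"
  define x' where "x' = (\<lambda>k. x k - \<alpha> * root_vec I k)"
  have "x' v = 0"
    using root_vec_at_endpoint[OF endpoints(3) I(2)] by (simp add: x'_def \<alpha>_def mult.assoc)
  have "\<exists>c. x' = (\<lambda>k. \<Sum>t\<in>A - {I}. c t * root_vec t k)"
  proof (rule remove.IH[OF I(1)])
    show "is_forest (A - {I})" using remove.prems(1) by (rule is_forest_subset) blast
    show "finite (V - {v})" using remove.prems(2) by simp
    show "\<forall>J\<in>A - {I}. fst J \<in> V - {v} \<and> snd J \<in> V - {v} \<and> fst J \<noteq> snd J"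
      using remove.prems(3) pendant by auto
    show "card (V - {v}) = card (A - {I}) + 1"
      using remove.prems(4) remove.hyps(1,2) \<open>v \<in> V\<close> I(1) by (simp add: card_Diff_singleton card_gt_0_iff)
    show "\<forall>k. k \<notin> V - {v} \<longrightarrow> x' k = 0"
      using \<open>x' v = 0\<close> remove.prems(5) endpoints by (auto simp: x'_def root_vec_def)
    have "(\<Sum>k\<in>V. x' k) = (\<Sum>k\<in>V. x k) - \<alpha> * (\<Sum>k\<in>V. root_vec I k)"
      by (simp add: x'_def sum_subtractf sum_distrib_left)
    then show "(\<Sum>k\<in>V - {v}. x' k) = 0"
      using remove.prems(2,6) sum_root_vec[OF remove.prems(2) endpoints(1,2)] \<open>x' v = 0\<close> \<open>v \<in> V\<close>
      by (simp add: sum.remove)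
  qed
  then obtain c where c: "x' = (\<lambda>k. \<Sum>t\<in>A - {I}. c t * root_vec t k)" ..
  have "x k = (\<Sum>t\<in>A. (c(I := \<alpha>)) t * root_vec t k)" for k
  proof -
    have "(\<Sum>t\<in>A - {I}. (c(I := \<alpha>)) t * root_vec t k) = x' k" by (simp add: c)
    then show ?thesis using remove.hyps(1) I(1) by (simp add: sum.remove x'_def)
  qed
  then show ?case by blast
qed

lemma forest_Z_basis_root_lattice:
  assumes "finite T" "\<forall>I\<in>T. is_arc n I" "is_forest T" "card T + 1 = n"
  shows "is_Z_basis root_vec T (root_lattice n)"
  unfolding is_Z_basis_def
proof (intro conjI ballI assms(1))
  have arc: "fst I \<in> {1..n}" "snd I \<in> {1..n}" "fst I \<noteq> snd I" if "I \<in> T" for I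
    using assms(2) that by (auto simp: is_arc_def)
  show "root_vec I \<in> root_lattice n" if "I \<in> T" for I
    using arc[OF that] sum_root_vec[of "{1..n}" I] by (auto simp: root_lattice_def root_vec_def)
  fix x assume "x \<in> root_lattice n"
  then obtain c where c: "x = (\<lambda>k. \<Sum>t\<in>T. c t * root_vec t k)"
    using forest_root_vecs_span[OF assms(1,3), of "{1..n}" x] arc assms(4)
    by (auto simp: root_lattice_def)
  let ?c = "\<lambda>t. if t \<in> T then c t else 0"
  show "\<exists>!c. (\<forall>t. t \<notin> T \<longrightarrow> c t = 0) \<and> x = (\<lambda>k. \<Sum>t\<in>T. c t * root_vec t k)"
  proof (rule ex1I[of _ ?c])
    show "(\<forall>t. t \<notin> T \<longrightarrow> ?c t = 0) \<and> x = (\<lambda>k. \<Sum>t\<in>T. ?c t * root_vec t k)"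
      using c by simp
  next
    fix d assume d: "(\<forall>t. t \<notin> T \<longrightarrow> d t = 0) \<and> x = (\<lambda>k. \<Sum>t\<in>T. d t * root_vec t k)"
    have "\<forall>k. (\<Sum>t\<in>T. (d t - c t) * root_vec t k) = 0"
      using c d by (simp add: left_diff_distrib sum_subtractf fun_eq_iff)
    then have "\<forall>t\<in>T. d t - c t = 0"
      using forest_root_vecs_independent[OF assms(1,3), of "\<lambda>t. d t - c t"] arc by blast
    then show "d = ?c" using d by auto
  qed
qed

theorem mainTheorem14:
  fixes n :: nat and T :: "(nat \<times> nat) set"
  assumes "n \<ge> 3"
    and "admissible n T"
    and "card T = n - 1"
  shows "is_Z_basis root_vec T (root_lattice n)"
proof (rule forest_Z_basis_root_lattice)
  show "finite T" "\<forall>I\<in>T. is_arc n I" using admissibleD[OF assms(2)] by auto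
  show "is_forest T" using assms(2) by (rule admissible_is_forest)
  show "card T + 1 = n" using assms(1,3) by simp
qed

end
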